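(* Let $\omega\in\Omega$. Let $\xi_0,\xi_1$ be two distinct infinite clusters of $\omega$ and let $C_1,C_2$ be two distinct infinite contours of $\phi(\omega)$. Then it is impossible that both $C_1$ and $C_2$ are incident to both $\xi_0$ and $\xi_1$.
   Context: Let $G$ be the square grid with vertex set $\mathbb{Z}^2$ and nearest-neighbour edges. The face of $G$ with lower-left corner $(m,n)$ is black if $m+n$ is even, white otherwise. $\Omega\subset\{0,1\}^{\mathbb{Z}^2}$ is the set of $\omega$ such that for every black face the states of its four vertices, listed clockwise from the lower-left corner, form one of $0000,1111,0011,1100,0110,1001$. A cluster of $\omega$ is a maximal $G$-connected set of vertices on which $\omega$ is constant, infinite if it has infinitely many vertices. Let $\mathbb{L}_1$ have vertices $(m-\tfrac12,n+\tfrac12)$, $m,n$ both even, and $\mathbb{L}_2$ vertices $(m-\tfrac12,n+\tfrac12)$, $m,n$ both odd; in each, two vertices are joined by an edge (a closed segment of length $2$) iff at Euclidean distance $2$. The center of each black face $F$ is the midpoint of exactly one edge $e_1$ of $\mathbb{L}_1$ and one edge $e_2$ of $\mathbb{L}_2$. Define $\phi(\omega)\in\{0,1\}^{E(\mathbb{L}_1)\cup E(\mathbb{L}_2)}$: if the configuration around $F$ is $0000$ or $1111$ both get $0$; if the two upper vertices share a state different from the two lower ones, the horizontal one of $e_1,e_2$ gets $1$, the vertical $0$; if the two left vertices share a state different from the two right ones, the vertical one gets $1$, the horizontal $0$. Edges with value $1$ are present; a contour is a connected component of the set of present edges, infinite if it has infinitely many edges. A cluster is incident to a contour if some vertex of the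 cluster is at Euclidean distance $\tfrac12$ from some edge (segment) of the contour. *)

theory Defs
  imports "HOL-Analysis.Analysis"
begin

type_synonym config = "int \<times> int \<Rightarrow> nat"
type_synonym pt = "real \<times> real"

text \<open>Black faces: lower-left corner (m,n) with m+n even.\<close>
definition black_face :: "int \<Rightarrow> int \<Rightarrow> bool" where
  "black_face m n \<longleftrightarrow> even (m + n)"

definition face_word :: "config \<Rightarrow> int \<Rightarrow> int \<Rightarrow> nat list" where
  "face_word \<omega> m n = [\<omega> (m, n), \<omega> (m, n + 1), \<omega> (m + 1, n + 1), \<omega> (m + 1, n)]"

definition Omega :: "config set" where
  "Omega = {\<omega>. (\<forall>v. \<omega> v \<in> {0, 1}) \<and>
     (\<forall>m n. black_face m n \<longrightarrow>
        face_word \<omega> m n \<in> {[0,0,0,0], [1,1,1,1], [0,0,1,1], [1,1,0,0], [0,1,1,0], [1,0,0,1]})}"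

definition grid_adj :: "int \<times> int \<Rightarrow> int \<times> int \<Rightarrow> bool" where
  "grid_adj u v \<longleftrightarrow> \<bar>fst u - fst v\<bar> + \<bar>snd u - snd v\<bar> = 1"

definition same_cluster :: "config \<Rightarrow> ((int \<times> int) \<times> (int \<times> int)) set" where
  "same_cluster \<omega> = {(u, v). grid_adj u v \<and> \<omega> u = \<omega> v}\<^sup>*"

definition is_cluster :: "config \<Rightarrow> (int \<times> int) set \<Rightarrow> bool" where
  "is_cluster \<omega> S \<longleftrightarrow> (\<exists>v. S = {u. (v, u) \<in> same_cluster \<omega>})"

definition L1V :: "pt set" where
  "L1V = {(of_int m - 1/2, of_int n + 1/2) | m n. even m \<and> even n}"

definition L2V :: "pt set" where
  "L2V = {(of_int m - 1/2, of_int n + 1/2) | m n. odd m \<and> odd n}"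

text \<open>Edges: an edge is represented by the set of its two endpoints; the edge as
  a closed segment is the convex hull of that set.\<close>
definition lat_edges :: "pt set \<Rightarrow> pt set set" where
  "lat_edges V = {{p, q} | p q. p \<in> V \<and> q \<in> V \<and> dist p q = 2}"

definition all_edges :: "pt set set" where
  "all_edges = lat_edges L1V \<union> lat_edges L2V"

definition edge_segment :: "pt set \<Rightarrow> pt set" where
  "edge_segment e = convex hull e"

definition upper_lower :: "config \<Rightarrow> int \<Rightarrow> int \<Rightarrow> bool" where
  "upper_lower \<omega> m n \<longleftrightarrow> \<omega> (m, n + 1) = \<omega> (m + 1, n + 1) \<and> \<omega> (m, n) = \<omega> (m + 1, n)
      \<and> \<omega> (m, n + 1) \<noteq> \<omega> (m, n)"

definition left_right :: "config \<Rightarrow> int \<Rightarrow> int \<Rightarrow> bool" where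
  "left_right \<omega> m n \<longleftrightarrow> \<omega> (m, n) = \<omega> (m, n + 1) \<and> \<omega> (m + 1, n) = \<omega> (m + 1, n + 1)
      \<and> \<omega> (m, n) \<noteq> \<omega> (m + 1, n)"

definition phi :: "config \<Rightarrow> pt set \<Rightarrow> nat" where
  "phi \<omega> e = (if (\<exists>p q m n. e = {p, q} \<and> black_face m n \<and>
                     midpoint p q = (of_int m + 1/2, of_int n + 1/2) \<and>
                     ((snd p = snd q \<and> upper_lower \<omega> m n) \<or>
                      (fst p = fst q \<and> left_right \<omega> m n)))
              then 1 else 0)"

definition present_edges :: "config \<Rightarrow> pt set set" where
  "present_edges \<omega> = {e \<in> all_edges. phi \<omega> e = 1}"

definition contour_rel :: "config \<Rightarrow> (pt set \<times> pt set) set" where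
  "contour_rel \<omega> = {(e, e'). e \<in> present_edges \<omega> \<and> e' \<in> present_edges \<omega> \<and> e \<inter> e' \<noteq> {}}\<^sup>*"

definition is_contour :: "config \<Rightarrow> pt set set \<Rightarrow> bool" where
  "is_contour \<omega> C \<longleftrightarrow> (\<exists>e \<in> present_edges \<omega>. C = {e'. (e, e') \<in> contour_rel \<omega>})"

definition incident :: "pt set set \<Rightarrow> (int \<times> int) set \<Rightarrow> bool" where
  "incident C S \<longleftrightarrow> (\<exists>v \<in> S. \<exists>e \<in> C.
      infdist (of_int (fst v), of_int (snd v)) (edge_segment e) = 1/2)"

end

theory Submission
  imports Defs
begin

(*
  Every grid edge uv with \<omega> u \<noteq> \<omega> v is crossed by a present edge, its dual edge, and
  around each face of the grid all these dual edges lie in a single contour.  Hence a contour C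
  incident to two clusters yields a grid walk from one to the other that crosses only walls
  belonging to C.  If C1 and C2 were both incident to \<xi>0 and \<xi>1, these two walks together with
  walks inside \<xi>0 and \<xi>1 would form a closed walk.  The walls of C1 separating \<xi>0 from its
  complement form a cocycle of the grid (even on every unit square), hence the coboundary of
  some \<sigma>; but the closed walk changes \<sigma> an odd number of times: once per step leaving or
  entering \<xi>0 along the C1-walk, and never elsewhere.
*)

section \<open>Cocycles on the square grid\<close>

lemma grid_adj_sym: "grid_adj u v \<longleftrightarrow> grid_adj v u"
  by (auto simp: grid_adj_def abs_minus_commute)

lemma grid_adj_cases:
  assumes "grid_adj u v"
  obtains "v = (fst u + 1, snd u)" | "v = (fst u - 1, snd u)"
    | "v = (fst u, snd u + 1)" | "v = (fst u, snd u - 1)"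
proof -
  obtain a b c d where uv: "u = (a, b)" "v = (c, d)"
    by (cases u, cases v)
  then have "\<bar>a - c\<bar> + \<bar>b - d\<bar> = 1"
    using assms by (simp add: grid_adj_def)
  then have "(c = a + 1 \<or> c = a - 1) \<and> d = b \<or> c = a \<and> (d = b + 1 \<or> d = b - 1)"
    by arith
  then show thesis
    using that uv by auto
qed

definition prefix_parity :: "(int \<Rightarrow> bool) \<Rightarrow> int \<Rightarrow> bool" where
  "prefix_parity c x \<longleftrightarrow> odd (card {i \<in> {min 0 x..<max 0 x}. c i})"

lemma prefix_parity_0 [simp]: "\<not> prefix_parity c 0"
  by (simp add: prefix_parity_def)

lemma prefix_parity_step: "prefix_parity c (x + 1) \<longleftrightarrow> prefix_parity c x \<noteq> c x"
proof -
  define A where "A y = {i \<in> {min 0 y..<max 0 y}. c i}" for y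
  have parity: "prefix_parity c y \<longleftrightarrow> odd (card (A y))" for y
    by (simp add: prefix_parity_def A_def)
  have fin: "finite (A y)" for y
    unfolding A_def by (rule finite_subset[OF _ finite_atLeastLessThan_int]) auto
  show ?thesis
  proof (cases "0 \<le> x")
    case True
    then have "A (x + 1) = (if c x then insert x (A x) else A x)" "x \<notin> A x"
      by (auto simp: A_def dest: order_le_imp_less_or_eq)
    then show ?thesis
      using fin by (simp add: parity)
  next
    case False
    then have "A x = (if c x then insert x (A (x + 1)) else A (x + 1))" "x \<notin> A (x + 1)"
      by (auto simp: A_def dest: order_le_imp_less_or_eq)
    then show ?thesis
      using fin by (simp add: parity)
  qed
qed

text \<open>\<sigma> integrates W along the x-axis and then up each column; the square condition
  makes neighbouring columns compatible.\<close>

lemma grid_cocycle_is_coboundary: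
  fixes W :: "int \<times> int \<Rightarrow> int \<times> int \<Rightarrow> bool"
  assumes sym: "\<And>u v. W u v \<longleftrightarrow> W v u"
    and square: "\<And>x y. W (x, y) (x + 1, y) \<noteq> W (x + 1, y) (x + 1, y + 1)
                   \<longleftrightarrow> W (x, y) (x, y + 1) \<noteq> W (x, y + 1) (x + 1, y + 1)"
  obtains \<sigma> :: "int \<times> int \<Rightarrow> bool" where "\<And>u v. grid_adj u v \<Longrightarrow> \<sigma> u \<noteq> \<sigma> v \<longleftrightarrow> W u v"
proof -
  define column where "column x = prefix_parity (\<lambda>j. W (x, j) (x, j + 1))" for x
  define \<sigma> where "\<sigma> p \<longleftrightarrow> prefix_parity (\<lambda>i. W (i, 0) (i + 1, 0)) (fst p) \<noteq> column (fst p) (snd p)"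
    for p
  have vertical: "\<sigma> (x, y + 1) \<noteq> \<sigma> (x, y) \<longleftrightarrow> W (x, y) (x, y + 1)" for x y
    by (auto simp: \<sigma>_def column_def prefix_parity_step)
  have "column (x + 1) y \<noteq> column x y \<longleftrightarrow> W (x, 0) (x + 1, 0) \<noteq> W (x, y) (x + 1, y)" for x y
  proof (induction y rule: int_induct[where k = 0])
    case (step1 i)
    then show ?case
      using square[of x i] by (simp add: column_def prefix_parity_step) blast
  next
    case (step2 i)
    then show ?case
      using square[of x "i - 1"] prefix_parity_step[of _ "i - 1"]
      by (simp add: column_def) blast
  qed (simp add: column_def)
  then have horizontal: "\<sigma> (x + 1, y) \<noteq> \<sigma> (x, y) \<longleftrightarrow> W (x, y) (x + 1, y)" for x y
    by (auto simp: \<sigma>_def prefix_parity_step)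
  have "\<sigma> u \<noteq> \<sigma> v \<longleftrightarrow> W u v" if "grid_adj u v" for u v
    using that
  proof (cases rule: grid_adj_cases)
    case 1
    then show ?thesis using horizontal[of "fst u" "snd u"] by auto
  next
    case 2
    then show ?thesis using horizontal[of "fst u - 1" "snd u"] sym[of u v] by auto
  next
    case 3
    then show ?thesis using vertical[of "fst u" "snd u"] by auto
  next
    case 4
    then show ?thesis using vertical[of "fst u" "snd u - 1"] sym[of u v] by auto
  qed
  then show ?thesis by (rule that)
qed

section \<open>Present edges, face by face\<close>

definition face_center :: "int \<Rightarrow> int \<Rightarrow> pt" where
  "face_center m n = (of_int m + 1/2, of_int n + 1/2)"

definition horiz_edge :: "int \<Rightarrow> int \<Rightarrow> pt set" where
  "horiz_edge m n = {face_center (m - 1) n, face_center (m + 1) n}"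

definition vert_edge :: "int \<Rightarrow> int \<Rightarrow> pt set" where
  "vert_edge m n = {face_center m (n - 1), face_center m (n + 1)}"

definition face_corners :: "int \<Rightarrow> int \<Rightarrow> (int \<times> int) set" where
  "face_corners m n = {(m, n), (m, n + 1), (m + 1, n), (m + 1, n + 1)}"

text \<open>The face-wise reading of phi: e is the present edge whose midpoint is the centre of the
  black face (m, n).\<close>

definition present_at :: "config \<Rightarrow> pt set \<Rightarrow> int \<Rightarrow> int \<Rightarrow> bool" where
  "present_at \<omega> e m n \<longleftrightarrow> black_face m n \<and>
     (e = horiz_edge m n \<and> upper_lower \<omega> m n \<or> e = vert_edge m n \<and> left_right \<omega> m n)"

lemma face_center_eq_iff [simp]: "face_center m n = face_center m' n' \<longleftrightarrow> m = m' \<and> n = n'"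
  by (simp add: face_center_def)

lemma face_center_in_L1V: "odd m \<Longrightarrow> even n \<Longrightarrow> face_center m n \<in> L1V"
  unfolding L1V_def face_center_def
  by (rule CollectI, rule exI[of _ "m + 1"], rule exI[of _ n]) auto

lemma face_center_in_L2V: "even m \<Longrightarrow> odd n \<Longrightarrow> face_center m n \<in> L2V"
  unfolding L2V_def face_center_def
  by (rule CollectI, rule exI[of _ "m + 1"], rule exI[of _ n]) auto

lemma doubleton_in_lat_edges: "p \<in> V \<Longrightarrow> q \<in> V \<Longrightarrow> dist p q = 2 \<Longrightarrow> {p, q} \<in> lat_edges V"
  unfolding lat_edges_def by blast

lemma horiz_edge_in_all_edges:
  assumes "black_face m n"
  shows "horiz_edge m n \<in> all_edges"
proof -
  have "dist (face_center (m - 1) n) (face_center (m + 1) n) = 2"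
    by (simp add: face_center_def dist_Pair_Pair dist_real_def)
  moreover have "even m \<and> even n \<or> odd m \<and> odd n"
    using assms by (auto simp: black_face_def)
  ultimately show ?thesis
    unfolding horiz_edge_def all_edges_def
    by (auto intro!: doubleton_in_lat_edges face_center_in_L1V face_center_in_L2V)
qed

lemma vert_edge_in_all_edges:
  assumes "black_face m n"
  shows "vert_edge m n \<in> all_edges"
proof -
  have "dist (face_center m (n - 1)) (face_center m (n + 1)) = 2"
    by (simp add: face_center_def dist_Pair_Pair dist_real_def)
  moreover have "even m \<and> even n \<or> odd m \<and> odd n"
    using assms by (auto simp: black_face_def)
  ultimately show ?thesis
    unfolding vert_edge_def all_edges_def
    by (auto intro!: doubleton_in_lat_edges face_center_in_L1V face_center_in_L2V)
qed

lemma present_at_imp_present: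
  assumes "present_at \<omega> e m n"
  shows "e \<in> present_edges \<omega>"
proof -
  have black: "black_face m n"
    using assms by (simp add: present_at_def)
  have mid: "midpoint (face_center (m - 1) n) (face_center (m + 1) n) = (of_int m + 1/2, of_int n + 1/2)"
    "midpoint (face_center m (n - 1)) (face_center m (n + 1)) = (of_int m + 1/2, of_int n + 1/2)"
    by (auto simp: midpoint_def face_center_def algebra_simps)
  from assms consider "e = horiz_edge m n" "upper_lower \<omega> m n" | "e = vert_edge m n" "left_right \<omega> m n"
    by (auto simp: present_at_def)
  then have "phi \<omega> e = 1"
  proof cases
    case 1
    then show ?thesis
      unfolding phi_def using black mid(1)
      by (intro if_P exI[of _ "face_center (m - 1) n"] exI[of _ "face_center (m + 1) n"] exI[of _ m] exI[of _ n])
        (simp add: horiz_edge_def face_center_def)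
  next
    case 2
    then show ?thesis
      unfolding phi_def using black mid(2)
      by (intro if_P exI[of _ "face_center m (n - 1)"] exI[of _ "face_center m (n + 1)"] exI[of _ m] exI[of _ n])
        (simp add: vert_edge_def face_center_def)
  qed
  moreover have "e \<in> all_edges"
    using assms horiz_edge_in_all_edges vert_edge_in_all_edges by (auto simp: present_at_def)
  ultimately show ?thesis
    by (simp add: present_edges_def)
qed

lemma doubleton_of_midpoint_horizontal:
  fixes p q c :: pt
  assumes "midpoint p q = c" "snd p = snd q" "dist p q = 2"
  shows "{p, q} = {c - (1, 0), c + (1, 0)}"
proof -
  obtain p1 p2 q1 where pq: "p = (p1, p2)" "q = (q1, p2)"
    using assms(2) by (cases p, cases q) auto
  have "\<bar>p1 - q1\<bar> = 2" "p1 + q1 = 2 * fst c" "snd c = p2"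
    using assms by (auto simp: pq dist_Pair_Pair dist_real_def midpoint_def)
  then have "p1 = fst c - 1 \<and> q1 = fst c + 1 \<or> p1 = fst c + 1 \<and> q1 = fst c - 1"
    by linarith
  then show ?thesis
    using \<open>snd c = p2\<close> by (cases c) (auto simp: pq doubleton_eq_iff)
qed

lemma doubleton_of_midpoint_vertical:
  fixes p q c :: pt
  assumes "midpoint p q = c" "fst p = fst q" "dist p q = 2"
  shows "{p, q} = {c - (0, 1), c + (0, 1)}"
proof -
  obtain p1 p2 q2 where pq: "p = (p1, p2)" "q = (p1, q2)"
    using assms(2) by (cases p, cases q) auto
  have "\<bar>p2 - q2\<bar> = 2" "p2 + q2 = 2 * snd c" "fst c = p1"
    using assms by (auto simp: pq dist_Pair_Pair dist_real_def midpoint_def)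
  then have "p2 = snd c - 1 \<and> q2 = snd c + 1 \<or> p2 = snd c + 1 \<and> q2 = snd c - 1"
    by linarith
  then show ?thesis
    using \<open>fst c = p1\<close> by (cases c) (auto simp: pq doubleton_eq_iff)
qed

lemma present_imp_present_at:
  assumes "e \<in> present_edges \<omega>"
  obtains m n where "present_at \<omega> e m n"
proof -
  have "phi \<omega> e = 1"
    using assms by (simp add: present_edges_def)
  then obtain p q m n where e: "e = {p, q}" and black: "black_face m n"
    and "midpoint p q = (of_int m + 1/2, of_int n + 1/2)"
    and dir: "snd p = snd q \<and> upper_lower \<omega> m n \<or> fst p = fst q \<and> left_right \<omega> m n"
    unfolding phi_def by (metis zero_neq_one)
  then have mid: "midpoint p q = face_center m n"
    by (simp add: face_center_def)
  obtain p' q' where "e = {p', q'}" "dist p' q' = 2"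
    using assms unfolding present_edges_def all_edges_def lat_edges_def by auto
  then have "dist p q = 2"
    using e by (auto simp: doubleton_eq_iff dist_commute)
  moreover have "face_center m n - (1, 0) = face_center (m - 1) n"
    "face_center m n + (1, 0) = face_center (m + 1) n"
    "face_center m n - (0, 1) = face_center m (n - 1)"
    "face_center m n + (0, 1) = face_center m (n + 1)"
    by (simp_all add: face_center_def)
  ultimately have "e = horiz_edge m n \<and> upper_lower \<omega> m n \<or> e = vert_edge m n \<and> left_right \<omega> m n"
    using dir doubleton_of_midpoint_horizontal[OF mid] doubleton_of_midpoint_vertical[OF mid]
    unfolding e horiz_edge_def vert_edge_def by metis
  then show thesis
    using that black by (auto simp: present_at_def)
qed

lemma present_at_unique:
  "present_at \<omega> e m n \<Longrightarrow> present_at \<omega> e m' n' \<Longrightarrow> m = m' \<and> n = n'"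
  by (auto simp: present_at_def horiz_edge_def vert_edge_def doubleton_eq_iff)

lemma present_at_same_face: "present_at \<omega> e m n \<Longrightarrow> present_at \<omega> e' m n \<Longrightarrow> e = e'"
  by (auto simp: present_at_def upper_lower_def left_right_def)

lemma present_at_endpoint:
  assumes "present_at \<omega> e m n" "z \<in> e"
  obtains p q where "z = face_center p q" "odd (p + q)" "face_corners m n \<inter> face_corners p q \<noteq> {}"
proof -
  have "even (m + n)"
    using assms(1) by (simp add: present_at_def black_face_def)
  moreover have "z \<in> {face_center (m - 1) n, face_center (m + 1) n, face_center m (n - 1), face_center m (n + 1)}"
    using assms by (auto simp: present_at_def horiz_edge_def vert_edge_def)
  ultimately show thesis
    using that by (auto simp: face_corners_def)
qed

section \<open>Dual edges of walls\<close>

lemma Omega_black_face_sides: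
  assumes "\<omega> \<in> Omega" "black_face m n"
  shows "\<omega> (m, n) \<noteq> \<omega> (m, n + 1) \<or> \<omega> (m + 1, n) \<noteq> \<omega> (m + 1, n + 1) \<Longrightarrow> upper_lower \<omega> m n"
    and "\<omega> (m, n) \<noteq> \<omega> (m + 1, n) \<or> \<omega> (m, n + 1) \<noteq> \<omega> (m + 1, n + 1) \<Longrightarrow> left_right \<omega> m n"
proof -
  have "face_word \<omega> m n \<in> {[0,0,0,0], [1,1,1,1], [0,0,1,1], [1,1,0,0], [0,1,1,0], [1,0,0,1]}"
    using assms by (simp add: Omega_def)
  then show "\<omega> (m, n) \<noteq> \<omega> (m, n + 1) \<or> \<omega> (m + 1, n) \<noteq> \<omega> (m + 1, n + 1) \<Longrightarrow> upper_lower \<omega> m n"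
    and "\<omega> (m, n) \<noteq> \<omega> (m + 1, n) \<or> \<omega> (m, n + 1) \<noteq> \<omega> (m + 1, n + 1) \<Longrightarrow> left_right \<omega> m n"
    by (auto simp: face_word_def upper_lower_def left_right_def)
qed

text \<open>The edge of L1 or L2 crossing the grid edge uv: it is centred at whichever of the two
  faces containing uv is black.\<close>

definition dual_edge :: "int \<times> int \<Rightarrow> int \<times> int \<Rightarrow> pt set" where
  "dual_edge u v =
    (if snd u = snd v then
       (if even (min (fst u) (fst v) + snd u) then vert_edge (min (fst u) (fst v)) (snd u)
        else vert_edge (min (fst u) (fst v)) (snd u - 1))
     else
       (if even (fst u + min (snd u) (snd v)) then horiz_edge (fst u) (min (snd u) (snd v))
        else horiz_edge (fst u - 1) (min (snd u) (snd v))))"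

lemma dual_edge_right:
  "dual_edge (x, y) (x + 1, y) = (if even (x + y) then vert_edge x y else vert_edge x (y - 1))"
  by (simp add: dual_edge_def)

lemma dual_edge_up:
  "dual_edge (x, y) (x, y + 1) = (if even (x + y) then horiz_edge x y else horiz_edge (x - 1) y)"
  by (simp add: dual_edge_def)

lemma dual_edge_sym: "grid_adj u v \<Longrightarrow> dual_edge u v = dual_edge v u"
  by (cases rule: grid_adj_cases) (auto simp: dual_edge_def min.commute)

lemma face_side_cases:
  assumes "u \<in> face_corners m n" "v \<in> face_corners m n" "grid_adj u v"
  obtains a b where "{u, v} = {a, b}"
    "(a, b) \<in> {((m, n), (m, n + 1)), ((m + 1, n), (m + 1, n + 1)), ((m, n), (m + 1, n)), ((m, n + 1), (m + 1, n + 1))}"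
  using assms by (auto simp: face_corners_def grid_adj_def insert_commute)

lemma dual_edge_doubleton:
  assumes "grid_adj u v" "{u, v} = {a, b}"
  shows "dual_edge u v = dual_edge a b" "fst u = fst v \<longleftrightarrow> fst a = fst b" "snd u = snd v \<longleftrightarrow> snd a = snd b"
    "\<omega> u \<noteq> \<omega> v \<longleftrightarrow> \<omega> a \<noteq> \<omega> b"
  using assms by (auto simp: doubleton_eq_iff dual_edge_sym)

lemma dual_edge_black_face:
  assumes "black_face m n" "u \<in> face_corners m n" "v \<in> face_corners m n" "grid_adj u v"
  shows "fst u = fst v \<and> dual_edge u v = horiz_edge m n \<or> snd u = snd v \<and> dual_edge u v = vert_edge m n"
proof -
  obtain a b where side: "{u, v} = {a, b}"
    "(a, b) \<in> {((m, n), (m, n + 1)), ((m + 1, n), (m + 1, n + 1)), ((m, n), (m + 1, n)), ((m, n + 1), (m + 1, n + 1))}"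
    using face_side_cases[OF assms(2-4)] .
  have "even (m + n)" "odd (m + 1 + n)" "odd (m + (n + 1))"
    using assms(1) by (simp_all add: black_face_def)
  then have "dual_edge (m, n) (m, n + 1) = horiz_edge m n" "dual_edge (m + 1, n) (m + 1, n + 1) = horiz_edge m n"
    "dual_edge (m, n) (m + 1, n) = vert_edge m n" "dual_edge (m, n + 1) (m + 1, n + 1) = vert_edge m n"
    by (simp_all add: dual_edge_up dual_edge_right)
  with side(2) have "fst a = fst b \<and> dual_edge a b = horiz_edge m n \<or> snd a = snd b \<and> dual_edge a b = vert_edge m n"
    by auto
  then show ?thesis
    using dual_edge_doubleton[OF assms(4) side(1)] by simp
qed

lemma dual_edge_white_face:
  assumes "odd (m + n)" "u \<in> face_corners m n" "v \<in> face_corners m n" "grid_adj u v"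
  shows "face_center m n \<in> dual_edge u v"
proof -
  obtain a b where side: "{u, v} = {a, b}"
    "(a, b) \<in> {((m, n), (m, n + 1)), ((m + 1, n), (m + 1, n + 1)), ((m, n), (m + 1, n)), ((m, n + 1), (m + 1, n + 1))}"
    using face_side_cases[OF assms(2-4)] .
  have "even (m + 1 + n)" "even (m + (n + 1))"
    using assms(1) by simp_all
  with assms(1) have "face_center m n \<in> dual_edge (m, n) (m, n + 1)" "face_center m n \<in> dual_edge (m + 1, n) (m + 1, n + 1)"
    "face_center m n \<in> dual_edge (m, n) (m + 1, n)" "face_center m n \<in> dual_edge (m, n + 1) (m + 1, n + 1)"
    by (simp_all add: dual_edge_up dual_edge_right horiz_edge_def vert_edge_def)
  with side(2) have "face_center m n \<in> dual_edge a b"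
    by auto
  then show ?thesis
    using dual_edge_doubleton[OF assms(4) side(1)] by simp
qed

lemma wall_present_at:
  assumes "\<omega> \<in> Omega" "black_face m n" "u \<in> face_corners m n" "v \<in> face_corners m n"
    and "grid_adj u v" "\<omega> u \<noteq> \<omega> v"
  shows "present_at \<omega> (dual_edge u v) m n"
proof -
  obtain a b where side: "{u, v} = {a, b}"
    "(a, b) \<in> {((m, n), (m, n + 1)), ((m + 1, n), (m + 1, n + 1)), ((m, n), (m + 1, n)), ((m, n + 1), (m + 1, n + 1))}"
    using face_side_cases[OF assms(3-5)] .
  then show ?thesis
    using assms(2,6) Omega_black_face_sides[OF assms(1,2)] dual_edge_black_face[OF assms(2-5)]
      dual_edge_doubleton(1-3)[OF assms(5) side(1)] dual_edge_doubleton(4)[OF assms(5) side(1), of \<omega>]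
    by (auto simp: present_at_def)
qed

lemma grid_edge_in_black_face:
  assumes "grid_adj u v"
  obtains m n where "black_face m n" "u \<in> face_corners m n" "v \<in> face_corners m n"
proof -
  have below: "black_face m n \<or> black_face m (n - 1)"
    and left: "black_face m n \<or> black_face (m - 1) n" for m n
    unfolding black_face_def by presburger+
  obtain x y where u: "u = (x, y)"
    by (cases u)
  from assms show thesis
  proof (cases rule: grid_adj_cases)
    case 1
    then show thesis
      using below[of x y] that[of x y] that[of x "y - 1"] by (auto simp: u face_corners_def)
  next
    case 2
    then show thesis
      using below[of "x - 1" y] that[of "x - 1" y] that[of "x - 1" "y - 1"] by (auto simp: u face_corners_def)
  next
    case 3
    then show thesis
      using left[of x y] that[of x y] that[of "x - 1" y] by (auto simp: u face_corners_def)
  next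
    case 4
    then show thesis
      using left[of x "y - 1"] that[of x "y - 1"] that[of "x - 1" "y - 1"] by (auto simp: u face_corners_def)
  qed
qed

lemma dual_edge_present:
  assumes "\<omega> \<in> Omega" "grid_adj u v" "\<omega> u \<noteq> \<omega> v"
  shows "dual_edge u v \<in> present_edges \<omega>"
proof -
  obtain m n where "black_face m n" "u \<in> face_corners m n" "v \<in> face_corners m n"
    using grid_edge_in_black_face[OF assms(2)] .
  then show ?thesis
    using wall_present_at assms present_at_imp_present by blast
qed

section \<open>Incidence\<close>

lemma lattice_point_at_half_distance:
  fixes x y m n :: int and s :: real
  assumes "dist (of_int x, of_int y) (s, of_int n + 1/2 :: real) = 1/2"
    and "of_int m - 1/2 \<le> s" "s \<le> of_int m + 3/2"
  shows "x \<in> {m, m + 1} \<and> y \<in> {n, n + 1}"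
proof -
  define k where "k = y - n"
  have "sqrt ((of_int x - s)\<^sup>2 + (of_int y - (of_int n + 1/2))\<^sup>2) = 1/2"
    using assms(1) by (simp add: dist_Pair_Pair dist_real_def)
  then have "(of_int x - s)\<^sup>2 + (of_int y - (of_int n + 1/2))\<^sup>2 = (1/2 :: real)\<^sup>2"
    by (metis add_nonneg_nonneg real_sqrt_pow2 zero_le_power2)
  moreover have "(of_int y - (of_int n + 1/2))\<^sup>2 = of_int (k * (k - 1)) + (1/2 :: real)\<^sup>2"
    by (simp add: k_def power2_eq_square algebra_simps)
  \<comment> \<open>(y - n - 1/2)^2 \<ge> 1/4 for integers, with equality only for y \<in> {n, n + 1}\<close>
  moreover have "0 \<le> k * (k - 1)"
    by (cases "k \<le> 0") (simp_all add: mult_nonpos_nonpos)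
  ultimately have "(of_int x - s)\<^sup>2 = 0" "k * (k - 1) = 0"
    by (smt (verit) of_int_0_le_iff of_int_eq_0_iff zero_le_power2)+
  then have "of_int x = s" "y = n \<or> y = n + 1"
    by (auto simp: k_def)
  then show ?thesis
    using assms(2,3) by auto
qed

lemma edge_segment_horiz_edge:
  "edge_segment (horiz_edge m n) = {of_int m - 1/2 .. of_int m + 3/2} \<times> {of_int n + 1/2}"
  by (simp add: edge_segment_def horiz_edge_def face_center_def segment_convex_hull[symmetric]
      closed_segment_same_snd closed_segment_eq_real_ivl add.commute)

lemma edge_segment_vert_edge:
  "edge_segment (vert_edge m n) = {of_int m + 1/2} \<times> {of_int n - 1/2 .. of_int n + 3/2}"
  by (simp add: edge_segment_def vert_edge_def face_center_def segment_convex_hull[symmetric]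
      closed_segment_same_fst closed_segment_eq_real_ivl add.commute)

lemma face_corner_at_half_distance:
  assumes "present_at \<omega> e m n" "infdist (of_int x, of_int y) (edge_segment e) = 1/2"
  shows "(x, y) \<in> face_corners m n"
proof -
  have "closed (edge_segment e)" "edge_segment e \<noteq> {}"
    using assms(1) by (auto simp: present_at_def edge_segment_horiz_edge edge_segment_vert_edge closed_Times)
  then obtain p where p: "p \<in> edge_segment e" "dist (of_int x, of_int y) p = 1/2"
    using infdist_attains_inf assms(2) by metis
  from assms(1) consider "e = horiz_edge m n" | "e = vert_edge m n"
    by (auto simp: present_at_def)
  then show ?thesis
  proof cases
    case 1
    then obtain s where "p = (s, of_int n + 1/2)" "of_int m - 1/2 \<le> s" "s \<le> of_int m + 3/2"
      using p(1) by (auto simp: edge_segment_horiz_edge)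
    then show ?thesis
      using lattice_point_at_half_distance[of x y s n m] p(2) by (auto simp: face_corners_def)
  next
    case 2
    then obtain s where "p = (of_int m + 1/2, s)" "of_int n - 1/2 \<le> s" "s \<le> of_int n + 3/2"
      using p(1) by (auto simp: edge_segment_vert_edge)
    moreover have "dist (of_int y, of_int x) (s, of_int m + 1/2 :: real) = 1/2"
      using p(2) calculation(1) by (simp add: dist_Pair_Pair add.commute)
    ultimately show ?thesis
      using lattice_point_at_half_distance[of y x s m n] by (auto simp: face_corners_def)
  qed
qed

section \<open>Clusters, contours and walks\<close>

lemma equiv_rtrancl: "sym r \<Longrightarrow> equiv UNIV (r\<^sup>*)"
  by (simp add: equiv_def refl_rtrancl sym_rtrancl trans_rtrancl)

lemma equiv_same_cluster: "equiv UNIV (same_cluster \<omega>)"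
  unfolding same_cluster_def by (rule equiv_rtrancl) (auto simp: sym_def grid_adj_sym)

lemma equiv_contour_rel: "equiv UNIV (contour_rel \<omega>)"
  unfolding contour_rel_def by (rule equiv_rtrancl) (auto simp: sym_def)

lemma cluster_in_quotient: "is_cluster \<omega> \<xi> \<Longrightarrow> \<xi> \<in> UNIV // same_cluster \<omega>"
  by (auto simp: is_cluster_def Image_singleton[symmetric] intro: quotientI)

lemma contour_in_quotient: "is_contour \<omega> C \<Longrightarrow> C \<in> UNIV // contour_rel \<omega>"
  by (auto simp: is_contour_def Image_singleton[symmetric] intro: quotientI)

lemma contour_subset_present: "is_contour \<omega> C \<Longrightarrow> C \<subseteq> present_edges \<omega>"
  unfolding is_contour_def contour_rel_def by (auto elim: rtranclE)

lemma contour_closed: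
  assumes "is_contour \<omega> C" "e \<in> C" "e' \<in> present_edges \<omega>" "e \<inter> e' \<noteq> {}"
  shows "e' \<in> C"
proof -
  have "(e, e') \<in> contour_rel \<omega>"
    using assms contour_subset_present unfolding contour_rel_def by blast
  then show ?thesis
    using in_quotient_imp_closed[OF equiv_contour_rel contour_in_quotient[OF assms(1)] assms(2)] by blast
qed

lemma cluster_boundary:
  assumes "is_cluster \<omega> \<xi>" "grid_adj u v" "u \<in> \<xi> \<longleftrightarrow> v \<notin> \<xi>"
  shows "\<omega> u \<noteq> \<omega> v"
proof
  assume "\<omega> u = \<omega> v"
  then have "(u, v) \<in> same_cluster \<omega>" "(v, u) \<in> same_cluster \<omega>"
    using assms(2) grid_adj_sym[of u v] by (auto simp: same_cluster_def intro!: r_into_rtrancl)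
  then show False
    using in_quotient_imp_closed[OF equiv_same_cluster cluster_in_quotient[OF assms(1)]] assms(3)
    by blast
qed

lemma clusters_disjoint:
  "is_cluster \<omega> \<xi> \<Longrightarrow> is_cluster \<omega> \<xi>' \<Longrightarrow> \<xi> \<noteq> \<xi>' \<Longrightarrow> \<xi> \<inter> \<xi>' = {}"
  using quotient_disj[OF equiv_same_cluster] cluster_in_quotient by blast

lemma contours_disjoint:
  "is_contour \<omega> C \<Longrightarrow> is_contour \<omega> C' \<Longrightarrow> C \<noteq> C' \<Longrightarrow> C \<inter> C' = {}"
  using quotient_disj[OF equiv_contour_rel] contour_in_quotient by blast

definition crossing_steps :: "config \<Rightarrow> pt set set \<Rightarrow> ((int \<times> int) \<times> (int \<times> int)) set" where
  "crossing_steps \<omega> C = {(u, v). grid_adj u v \<and> (\<omega> u \<noteq> \<omega> v \<longrightarrow> dual_edge u v \<in> C)}"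

lemma cluster_walk:
  assumes "is_cluster \<omega> \<xi>" "a \<in> \<xi>" "b \<in> \<xi>"
  shows "(a, b) \<in> (crossing_steps \<omega> {})\<^sup>*"
proof -
  have "(a, b) \<in> same_cluster \<omega>"
    using in_quotient_imp_in_rel[OF equiv_same_cluster cluster_in_quotient[OF assms(1)]] assms(2,3) by blast
  then show ?thesis
    by (simp add: same_cluster_def crossing_steps_def)
qed

lemma face_corners_connected:
  assumes "\<And>u v. u \<in> face_corners p q \<Longrightarrow> v \<in> face_corners p q \<Longrightarrow> grid_adj u v \<Longrightarrow> (u, v) \<in> R"
    and "a \<in> face_corners p q" "b \<in> face_corners p q"
  shows "(a, b) \<in> R\<^sup>*"
proof -
  have sides: "((p, q), (p, q + 1)) \<in> R" "((p, q + 1), (p, q)) \<in> R"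
    "((p, q), (p + 1, q)) \<in> R" "((p + 1, q), (p, q)) \<in> R"
    "((p, q + 1), (p + 1, q + 1)) \<in> R" "((p + 1, q + 1), (p, q + 1)) \<in> R"
    by (auto intro!: assms(1) simp: face_corners_def grid_adj_def)
  have "((p, q), x) \<in> R\<^sup>* \<and> (x, (p, q)) \<in> R\<^sup>*" if "x \<in> face_corners p q" for x
    using that sides unfolding face_corners_def
    by (auto intro: rtrancl_into_rtrancl converse_rtrancl_into_rtrancl)
  then show ?thesis
    using assms(2,3) by (meson rtrancl_trans)
qed

lemma black_face_corners_connected:
  assumes "\<omega> \<in> Omega" "present_at \<omega> e m n" "e \<in> C" "a \<in> face_corners m n" "b \<in> face_corners m n"
  shows "(a, b) \<in> (crossing_steps \<omega> C)\<^sup>*"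
proof (rule face_corners_connected[OF _ assms(4,5)])
  have black: "black_face m n"
    using assms(2) by (simp add: present_at_def)
  fix u v assume uv: "u \<in> face_corners m n" "v \<in> face_corners m n" "grid_adj u v"
  have "dual_edge u v = e" if "\<omega> u \<noteq> \<omega> v"
    using present_at_same_face[OF wall_present_at[OF assms(1) black uv that] assms(2)] .
  then show "(u, v) \<in> crossing_steps \<omega> C"
    using uv(3) assms(3) by (auto simp: crossing_steps_def)
qed

lemma white_face_corners_connected:
  assumes "\<omega> \<in> Omega" "is_contour \<omega> C" "e \<in> C" "face_center p q \<in> e" "odd (p + q)"
    and "a \<in> face_corners p q" "b \<in> face_corners p q"
  shows "(a, b) \<in> (crossing_steps \<omega> C)\<^sup>*"
proof (rule face_corners_connected[OF _ assms(6,7)])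
  fix u v assume uv: "u \<in> face_corners p q" "v \<in> face_corners p q" "grid_adj u v"
  have "dual_edge u v \<in> C" if "\<omega> u \<noteq> \<omega> v"
    using contour_closed[OF assms(2,3) dual_edge_present[OF assms(1) uv(3) that]]
      dual_edge_white_face[OF assms(5) uv] assms(4) by blast
  then show "(u, v) \<in> crossing_steps \<omega> C"
    using uv(3) by (simp add: crossing_steps_def)
qed

text \<open>Consecutive edges of a contour share an endpoint, the centre of a white face that touches
  the black faces of both edges.\<close>

lemma contour_walk:
  assumes "\<omega> \<in> Omega" "is_contour \<omega> C" "e \<in> C" "present_at \<omega> e m n" "a \<in> face_corners m n"
    and "(e, e') \<in> contour_rel \<omega>" "present_at \<omega> e' m' n'" "b \<in> face_corners m' n'"
  shows "(a, b) \<in> (crossing_steps \<omega> C)\<^sup>*"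
  using assms(6)[unfolded contour_rel_def] assms(7,8)
proof (induction arbitrary: m' n' b rule: rtrancl_induct)
  case base
  then have "m' = m \<and> n' = n"
    using present_at_unique assms(4) by blast
  then show ?case
    using black_face_corners_connected[OF assms(1,4,3,5)] base by simp
next
  case (step f f')
  have "(e, f) \<in> contour_rel \<omega>"
    using step.hyps(1) by (simp add: contour_rel_def)
  then have "f \<in> C"
    using in_quotient_imp_closed[OF equiv_contour_rel contour_in_quotient[OF assms(2)] assms(3)] by blast
  obtain z where z: "z \<in> f" "z \<in> f'"
    using step.hyps(2) by blast
  have "f' \<in> C"
    using contour_closed[OF assms(2) \<open>f \<in> C\<close>] step.hyps(2) by blast
  obtain m1 n1 where f: "present_at \<omega> f m1 n1"
    using present_imp_present_at step.hyps(2) by blast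
  obtain p q s1 where pq: "z = face_center p q" "odd (p + q)"
    and s1: "s1 \<in> face_corners m1 n1" "s1 \<in> face_corners p q"
    using present_at_endpoint[OF f z(1)] by blast
  obtain p' q' where "z = face_center p' q'" "face_corners m' n' \<inter> face_corners p' q' \<noteq> {}"
    using present_at_endpoint[OF step.prems(1) z(2)] by metis
  then obtain s2 where s2: "s2 \<in> face_corners m' n'" "s2 \<in> face_corners p q"
    using pq(1) by auto
  have "(a, s1) \<in> (crossing_steps \<omega> C)\<^sup>*"
    using step.IH[OF f s1(1)] .
  also have "(s1, s2) \<in> (crossing_steps \<omega> C)\<^sup>*"
    using white_face_corners_connected[OF assms(1,2) \<open>f \<in> C\<close> _ pq(2) s1(2) s2(2)] z(1) pq(1) by blast
  also have "(s2, b) \<in> (crossing_steps \<omega> C)\<^sup>*"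
    using black_face_corners_connected[OF assms(1) step.prems(1) \<open>f' \<in> C\<close> s2(1) step.prems(2)] .
  finally show ?case .
qed

lemma incident_contour_walk:
  assumes "\<omega> \<in> Omega" "is_contour \<omega> C" "incident C \<xi>" "incident C \<xi>'"
  obtains a b where "a \<in> \<xi>" "b \<in> \<xi>'" "(a, b) \<in> (crossing_steps \<omega> C)\<^sup>*"
proof -
  have corner: "\<exists>a\<in>\<zeta>. \<exists>e\<in>C. \<exists>m n. present_at \<omega> e m n \<and> a \<in> face_corners m n"
    if inc: "incident C \<zeta>" for \<zeta>
  proof -
    obtain a e where a: "a \<in> \<zeta>" "e \<in> C" "infdist (of_int (fst a), of_int (snd a)) (edge_segment e) = 1/2"
      using inc unfolding incident_def by blast
    obtain m n where "present_at \<omega> e m n"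
      using present_imp_present_at contour_subset_present[OF assms(2)] a(2) by blast
    with a show ?thesis
      using face_corner_at_half_distance[of \<omega> e m n "fst a" "snd a"] by auto
  qed
  obtain a e m n where a: "a \<in> \<xi>" "e \<in> C" "present_at \<omega> e m n" "a \<in> face_corners m n"
    using corner[OF assms(3)] by blast
  obtain b e' m' n' where b: "b \<in> \<xi>'" "e' \<in> C" "present_at \<omega> e' m' n'" "b \<in> face_corners m' n'"
    using corner[OF assms(4)] by blast
  have "(e, e') \<in> contour_rel \<omega>"
    using in_quotient_imp_in_rel[OF equiv_contour_rel contour_in_quotient[OF assms(2)]] a(2) b(2) by blast
  then show thesis
    using that[OF a(1) b(1)] contour_walk[OF assms(1,2) a(2-4) _ b(3,4)] by blast
qed

section \<open>The cut of a contour and a cluster\<close>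

lemma face_walls_same_contour:
  assumes "\<omega> \<in> Omega" "is_contour \<omega> C"
    and "u \<in> face_corners p q" "v \<in> face_corners p q" "grid_adj u v" "\<omega> u \<noteq> \<omega> v" "dual_edge u v \<in> C"
    and "u' \<in> face_corners p q" "v' \<in> face_corners p q" "grid_adj u' v'" "\<omega> u' \<noteq> \<omega> v'"
  shows "dual_edge u' v' \<in> C"
proof (cases "black_face p q")
  case True
  then show ?thesis
    using present_at_same_face[OF wall_present_at[OF assms(1) True assms(3-6)]
        wall_present_at[OF assms(1) True assms(8-11)]] assms(7)
    by simp
next
  case False
  then have "odd (p + q)"
    by (simp add: black_face_def)
  then show ?thesis
    using contour_closed[OF assms(2,7) dual_edge_present[OF assms(1,10,11)]]
      dual_edge_white_face[OF _ assms(3-5)] dual_edge_white_face[OF _ assms(8-10)]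
    by blast
qed

lemma contour_cluster_cut:
  assumes "\<omega> \<in> Omega" "is_contour \<omega> C" "is_cluster \<omega> \<xi>"
  obtains \<sigma> :: "int \<times> int \<Rightarrow> bool"
  where "\<And>u v. grid_adj u v \<Longrightarrow> \<sigma> u \<noteq> \<sigma> v \<longleftrightarrow> dual_edge u v \<in> C \<and> (u \<in> \<xi> \<longleftrightarrow> v \<notin> \<xi>)"
proof -
  define W where "W u v \<longleftrightarrow> grid_adj u v \<and> dual_edge u v \<in> C \<and> (u \<in> \<xi> \<longleftrightarrow> v \<notin> \<xi>)" for u v
  have sym: "W u v \<longleftrightarrow> W v u" for u v
    using grid_adj_sym[of u v] dual_edge_sym[of u v] unfolding W_def by auto
  have corners: "(x, y) \<in> face_corners x y" "(x, y + 1) \<in> face_corners x y"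
    "(x + 1, y) \<in> face_corners x y" "(x + 1, y + 1) \<in> face_corners x y"
    and sides: "grid_adj (x, y) (x + 1, y)" "grid_adj (x + 1, y) (x + 1, y + 1)"
    "grid_adj (x, y) (x, y + 1)" "grid_adj (x, y + 1) (x + 1, y + 1)" for x y
    by (auto simp: face_corners_def grid_adj_def)
  have separating_wall: "\<omega> u \<noteq> \<omega> v" if "grid_adj u v" "u \<in> \<xi> \<longleftrightarrow> v \<notin> \<xi>" for u v
    using cluster_boundary[OF assms(3) that] .
  have square: "W (x, y) (x + 1, y) \<noteq> W (x + 1, y) (x + 1, y + 1)
      \<longleftrightarrow> W (x, y) (x, y + 1) \<noteq> W (x, y + 1) (x + 1, y + 1)" for x y
  proof (cases "\<exists>u v. u \<in> face_corners x y \<and> v \<in> face_corners x y \<and> grid_adj u v \<and> \<omega> u \<noteq> \<omega> v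
      \<and> dual_edge u v \<in> C")
    case True
    then obtain u v where uv: "u \<in> face_corners x y" "v \<in> face_corners x y" "grid_adj u v"
      "\<omega> u \<noteq> \<omega> v" "dual_edge u v \<in> C"
      by blast
    have side: "W u' v' \<longleftrightarrow> (u' \<in> \<xi> \<longleftrightarrow> v' \<notin> \<xi>)"
      if "u' \<in> face_corners x y" "v' \<in> face_corners x y" "grid_adj u' v'" for u' v'
    proof -
      have "dual_edge u' v' \<in> C" if "u' \<in> \<xi> \<longleftrightarrow> v' \<notin> \<xi>"
        using face_walls_same_contour[OF assms(1,2) uv \<open>u' \<in> _\<close> \<open>v' \<in> _\<close> \<open>grid_adj u' v'\<close>
            separating_wall[OF \<open>grid_adj u' v'\<close> that]] .
      then show ?thesis
        using that(3) by (auto simp: W_def)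
    qed
    \<comment> \<open>both sides now say whether (x, y) and (x + 1, y + 1) lie on different sides of \<xi>\<close>
    show ?thesis
      using side[OF corners(1,3) sides(1)] side[OF corners(3,4) sides(2)]
        side[OF corners(1,2) sides(3)] side[OF corners(2,4) sides(4)]
      by (cases "(x, y) \<in> \<xi>"; cases "(x + 1, y) \<in> \<xi>"; cases "(x, y + 1) \<in> \<xi>") simp_all
  next
    case False
    have no_wall: "\<not> W u v" if "u \<in> face_corners x y" "v \<in> face_corners x y" for u v
    proof
      assume "W u v"
      then have "grid_adj u v" "dual_edge u v \<in> C" "\<omega> u \<noteq> \<omega> v"
        using separating_wall unfolding W_def by blast+
      then show False
        using False that by blast
    qed
    show ?thesis
      using no_wall[OF corners(1,3)] no_wall[OF corners(3,4)] no_wall[OF corners(1,2)] no_wall[OF corners(2,4)]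
      by simp
  qed
  obtain \<sigma> :: "int \<times> int \<Rightarrow> bool" where \<sigma>: "\<And>u v. grid_adj u v \<Longrightarrow> \<sigma> u \<noteq> \<sigma> v \<longleftrightarrow> W u v"
    using grid_cocycle_is_coboundary[of W, OF sym square] by blast
  show thesis
  proof (rule that)
    fix u v assume "grid_adj u v"
    then show "\<sigma> u \<noteq> \<sigma> v \<longleftrightarrow> dual_edge u v \<in> C \<and> (u \<in> \<xi> \<longleftrightarrow> v \<notin> \<xi>)"
      using \<sigma> by (simp add: W_def)
  qed
qed

lemma cut_potential_along_contour:
  assumes "is_cluster \<omega> \<xi>"
    and "\<And>u v. grid_adj u v \<Longrightarrow> \<sigma> u \<noteq> \<sigma> v \<longleftrightarrow> dual_edge u v \<in> C \<and> (u \<in> \<xi> \<longleftrightarrow> v \<notin> \<xi>)"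
    and "(a, b) \<in> (crossing_steps \<omega> C)\<^sup>*"
  shows "(\<sigma> a \<longleftrightarrow> a \<in> \<xi>) \<longleftrightarrow> (\<sigma> b \<longleftrightarrow> b \<in> \<xi>)"
  using assms(3)
proof (induction rule: rtrancl_induct)
  case (step b c)
  then have "grid_adj b c" "\<omega> b \<noteq> \<omega> c \<Longrightarrow> dual_edge b c \<in> C"
    by (auto simp: crossing_steps_def)
  then show ?case
    using step.IH assms(2)[of b c] cluster_boundary[OF assms(1), of b c] by blast
qed simp

lemma cut_potential_off_contour:
  assumes "is_cluster \<omega> \<xi>"
    and "\<And>u v. grid_adj u v \<Longrightarrow> \<sigma> u \<noteq> \<sigma> v \<longleftrightarrow> dual_edge u v \<in> C \<and> (u \<in> \<xi> \<longleftrightarrow> v \<notin> \<xi>)"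
    and "(a, b) \<in> (crossing_steps \<omega> C')\<^sup>*" "C \<inter> C' = {}"
  shows "\<sigma> a \<longleftrightarrow> \<sigma> b"
  using assms(3)
proof (induction rule: rtrancl_induct)
  case (step b c)
  then have "grid_adj b c" "\<omega> b \<noteq> \<omega> c \<Longrightarrow> dual_edge b c \<in> C'"
    by (auto simp: crossing_steps_def)
  then show ?case
    using step.IH assms(2)[of b c] assms(4) cluster_boundary[OF assms(1), of b c] by blast
qed simp

theorem lemma6p3:
  fixes \<omega> :: config and \<xi>0 \<xi>1 :: "(int \<times> int) set" and C1 C2 :: "pt set set"
  assumes "\<omega> \<in> Omega"
    and "is_cluster \<omega> \<xi>0" and "infinite \<xi>0"
    and "is_cluster \<omega> \<xi>1" and "infinite \<xi>1"
    and "\<xi>0 \<noteq> \<xi>1"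
    and "is_contour \<omega> C1" and "infinite C1"
    and "is_contour \<omega> C2" and "infinite C2"
    and "C1 \<noteq> C2"
  shows "\<not> (incident C1 \<xi>0 \<and> incident C1 \<xi>1 \<and> incident C2 \<xi>0 \<and> incident C2 \<xi>1)"
  \<comment> \<open>the argument does not use that the clusters and contours are infinite\<close>
proof
  assume "incident C1 \<xi>0 \<and> incident C1 \<xi>1 \<and> incident C2 \<xi>0 \<and> incident C2 \<xi>1"
  then obtain a0 a1 b0 b1 where ends: "a0 \<in> \<xi>0" "a1 \<in> \<xi>1" "b0 \<in> \<xi>0" "b1 \<in> \<xi>1"
    and walk1: "(a0, a1) \<in> (crossing_steps \<omega> C1)\<^sup>*" and walk2: "(b1, b0) \<in> (crossing_steps \<omega> C2)\<^sup>*"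
    using incident_contour_walk[OF assms(1,7)] incident_contour_walk[OF assms(1,9)] by metis
  obtain \<sigma> :: "int \<times> int \<Rightarrow> bool" where \<sigma>: "\<And>u v. grid_adj u v \<Longrightarrow> \<sigma> u \<noteq> \<sigma> v \<longleftrightarrow> dual_edge u v \<in> C1 \<and> (u \<in> \<xi>0 \<longleftrightarrow> v \<notin> \<xi>0)"
    using contour_cluster_cut[OF assms(1,7,2)] by blast
  have "a1 \<notin> \<xi>0"
    using clusters_disjoint[OF assms(2,4,6)] ends(2) by blast
  then have "\<sigma> a0 \<noteq> \<sigma> a1"
    using cut_potential_along_contour[OF assms(2) \<sigma> walk1] ends(1) by blast
  moreover have "\<sigma> b1 \<longleftrightarrow> \<sigma> b0"
    using cut_potential_off_contour[OF assms(2) \<sigma> walk2 contours_disjoint[OF assms(7,9,11)]] .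
  moreover have "\<sigma> a1 \<longleftrightarrow> \<sigma> b1" "\<sigma> b0 \<longleftrightarrow> \<sigma> a0"
    using cut_potential_off_contour[OF assms(2) \<sigma> cluster_walk[OF assms(4) ends(2,4)]]
      cut_potential_off_contour[OF assms(2) \<sigma> cluster_walk[OF assms(2) ends(3,1)]]
    by simp_all
  ultimately show False
    by simp
qed

end
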